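(* Assume the mixed-integer semidefinite program $$\min\{\langle C,X\rangle : \mathcal{A}(X)=b,\ X\succeq \mathbf{0},\ X_{ij}\in B_{ij}\ \forall (i,j)\in\mathcal{J}\}\qquad(\mathrm{MISDP})$$ is feasible with bounded feasible set $\mathcal{F}_{MISDP}$ and optimal value $z_{MISDP}$. Let $\mathcal{F}_{SDP}=\{X:\mathcal{A}(X)=b,\ X\succeq\mathbf{0},\ l_{ij}\le X_{ij}\le u_{ij}\ \forall(i,j)\in\mathcal{J}\}$ with $z_{SDP}=\min\{\langle C,X\rangle: X\in\mathcal{F}_{SDP}\}$, and $\mathcal{F}_{LD}=\{X:\mathcal{A}_1(X)=b_1,\ X\succeq\mathbf{0},\ X\in\mathrm{conv}(P)\}$ with $z_{LD}=\min\{\langle C,X\rangle: X\in\mathcal{F}_{LD}\}$. Let $\chi^*_{MISDP}$ and $\chi^*_{LD}$ be the sets of optimal solutions of (MISDP) and of $\min\{\langle C,X\rangle:X\in\mathcal{F}_{LD}\}$, respectively. Then (i) $z_{LD}=z_{MISDP}$ if and only if $-C\in\mathcal{N}_{\mathcal{F}_{LD}}(X^* )$ for all $X^*\in\chi^*_{MISDP}$; (ii) $z_{SDP}=z_{LD}$ if and only if $-C\in\mathcal{N}_{\mathcal{F}_{SDP}}(X^* )$ for all $X^*\in\chi^*_{LD}$.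
   Context: $\mathcal{S}^n$ denotes the real symmetric $n\times n$ matrices with $\langle X,Y\rangle=\mathrm{tr}(XY)$; $X\succeq\mathbf{0}$ means positive semidefinite. $C\in\mathcal{S}^n$, $b\in\mathbb{R}^m$, $\mathcal{A}:\mathcal{S}^n\to\mathbb{R}^m$ linear with $\mathcal{A}(X)_i=\langle A_i,X\rangle$. $\mathcal{J}\subseteq[n]\times[n]$ and for $(i,j)\in\mathcal{J}$, $B_{ij}\subseteq\mathbb{Z}$ is a finite set with smallest element $l_{ij}$ and largest element $u_{ij}$. The constraints $\mathcal{A}(X)=b$ are split into $\mathcal{A}_1(X)=b_1$ ($b_1\in\mathbb{R}^{m_1}$) and $\mathcal{A}_2(X)=b_2$, and $P=\{X\in\mathcal{S}^n:\mathcal{A}_2(X)=b_2,\ X_{ij}\in B_{ij}\ \forall(i,j)\in\mathcal{J}\}$, assumed bounded. (The value $z_{LD}$ coincides with the Lagrangian dual value $\sup_{S\succeq\mathbf{0},\lambda}\min_{X\in P}\{\langle C,X\rangle-\langle S,X\rangle+\lambda^\top(\mathcal{A}_1(X)-b_1)\}$.) For a convex set $K\subseteq\mathcal{S}^n$ and $X\in K$, the normal cone is $\mathcal{N}_K(X)=\{Z\in\mathcal{S}^n:\langle Z,X\rangle\ge\langle Z,Y\rangle\ \forall Y\in K\}$. *)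

theory Defs
  imports "HOL-Analysis.Analysis"
begin

type_synonym 'n mat = "real^'n^'n"

definition symm :: "'n::finite mat \<Rightarrow> bool" where
  "symm X \<longleftrightarrow> transpose X = X"

definition frob :: "'n::finite mat \<Rightarrow> 'n mat \<Rightarrow> real" where
  "frob X Y = trace (X ** Y)"

definition psd :: "'n::finite mat \<Rightarrow> bool" where
  "psd X \<longleftrightarrow> symm X \<and> (\<forall>v. 0 \<le> v \<bullet> (X *v v))"

definition normal_cone :: "'n::finite mat set \<Rightarrow> 'n mat \<Rightarrow> 'n mat set" where
  "normal_cone K X = {Z. symm Z \<and> (\<forall>Y\<in>K. frob Z X \<ge> frob Z Y)}"

definition lin_sat :: "('k \<Rightarrow> 'n::finite mat) \<Rightarrow> ('k \<Rightarrow> real) \<Rightarrow> 'n mat \<Rightarrow> bool" where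
  "lin_sat A b X \<longleftrightarrow> (\<forall>i. frob (A i) X = b i)"

text \<open>The problem data: constraints split into A1 (index 'k) and A2 (index 'l).\<close>
definition F_MISDP where
  "F_MISDP A1 b1 A2 b2 J B =
     {X. lin_sat A1 b1 X \<and> lin_sat A2 b2 X \<and> psd X \<and>
         (\<forall>(i,j)\<in>J. X $ i $ j \<in> real_of_int ` B i j)}"

definition F_SDP where
  "F_SDP A1 b1 A2 b2 J B =
     {X. lin_sat A1 b1 X \<and> lin_sat A2 b2 X \<and> psd X \<and>
         (\<forall>(i,j)\<in>J. real_of_int (Min (B i j)) \<le> X $ i $ j \<and>
                      X $ i $ j \<le> real_of_int (Max (B i j)))}"

definition P_set where
  "P_set A2 b2 J B =
     {X. symm X \<and> lin_sat A2 b2 X \<and> (\<forall>(i,j)\<in>J. X $ i $ j \<in> real_of_int ` B i j)}"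

definition F_LD where
  "F_LD A1 b1 A2 b2 J B =
     {X. lin_sat A1 b1 X \<and> psd X \<and> X \<in> convex hull (P_set A2 b2 J B)}"

text \<open>Optimal value (a minimum, attained in the setting of the theorem) and optimal solution set.\<close>
definition optval :: "'n::finite mat \<Rightarrow> 'n mat set \<Rightarrow> real" where
  "optval C F = (INF X\<in>F. frob C X)"

definition optset :: "'n::finite mat \<Rightarrow> 'n mat set \<Rightarrow> 'n mat set" where
  "optset C F = {X\<in>F. frob C X = optval C F}"

end

theory Submission
  imports Defs
begin

(* F_MISDP is contained in F_LD, which is contained in F_SDP, and - C lies in the normal cone of
   K at X exactly when X minimises <C, .> over K.  So both equivalences are instances of one fact
   about nested feasible sets S, T with S compact and T bounded: the optimal values agree iff every
   optimum over S is optimal over T.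
   F_SDP is bounded because a symmetric direction D with A_2(D) = 0 vanishing on J would give a
   whole line X0 + t D inside the bounded set P; hence the J-entries, which are confined to a box,
   control the norm of X - X0. *)

lemma frob_eq_inner: "frob A X = inner (transpose A) X"
  by (simp add: frob_def trace_def matrix_matrix_mult_def inner_vec_def transpose_def)
     (rule sum.swap)

lemma bounded_linear_frob: "bounded_linear (frob A)"
  by (simp add: frob_eq_inner[abs_def] bounded_linear_inner_right)

lemma frob_uminus_left: "frob (- A) X = - frob A X"
  by (simp add: frob_def matrix_matrix_mult_def trace_def sum_negf)

lemma symm_iff: "symm X \<longleftrightarrow> (\<forall>i j. X $ i $ j = X $ j $ i)"
  unfolding symm_def transpose_def vec_eq_iff by auto

lemma closed_symm: "closed {X :: 'n::finite mat. symm X}"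
  unfolding symm_iff by (intro closed_Collect_all closed_Collect_eq continuous_intros)

lemma closed_psd: "closed {X :: 'n::finite mat. psd X}"
proof -
  have "closed {X :: 'n mat. \<forall>v. 0 \<le> v \<bullet> (X *v v)}"
    unfolding inner_vec_def matrix_vector_mult_def
    by (intro closed_Collect_all closed_Collect_le continuous_intros)
  then show ?thesis
    unfolding psd_def using closed_Collect_conj[OF closed_symm] by blast
qed

lemma lin_sat_iff_inner: "lin_sat A b X \<longleftrightarrow> (\<forall>i. inner (transpose (A i)) X = b i)"
  by (simp add: lin_sat_def frob_eq_inner)

lemma closed_lin_sat: "closed {X. lin_sat A b X}"
  unfolding lin_sat_iff_inner by (intro closed_Collect_all closed_hyperplane)

lemma convex_lin_sat: "convex {X. lin_sat A b X}"
proof -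
  have "{X. lin_sat A b X} = (\<Inter>i. {X. inner (transpose (A i)) X = b i})"
    by (auto simp: lin_sat_iff_inner)
  then show ?thesis by (simp add: convex_INT convex_hyperplane)
qed

lemma subspace_symm_lin_sat_0: "subspace {D. symm D \<and> lin_sat A (\<lambda>_. 0) D}"
  unfolding subspace_def symm_iff lin_sat_iff_inner by (simp add: inner_add_right)

lemma lin_sat_diff:
  "lin_sat A b X \<Longrightarrow> lin_sat A b Y \<Longrightarrow> lin_sat A (\<lambda>_. 0) (X - Y)"
  by (simp add: lin_sat_iff_inner inner_diff_right)

lemma lin_sat_add_line:
  "lin_sat A b X \<Longrightarrow> lin_sat A (\<lambda>_. 0) D \<Longrightarrow> lin_sat A b (X + t *\<^sub>R D)"
  by (simp add: lin_sat_iff_inner inner_add_right)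

lemma closed_integral_entries:
  assumes "\<And>i j. (i, j) \<in> J \<Longrightarrow> finite (B i j)"
  shows "closed {X :: 'n::finite mat. \<forall>(i, j)\<in>J. X $ i $ j \<in> real_of_int ` B i j}"
proof -
  have "{X :: 'n mat. \<forall>(i, j)\<in>J. X $ i $ j \<in> real_of_int ` B i j}
      = (\<Inter>(i, j)\<in>J. \<Union>s\<in>B i j. {X. X $ i $ j = real_of_int s})"
    by auto
  moreover have "closed (\<Union>s\<in>B i j. {X :: 'n mat. X $ i $ j = real_of_int s})" if "(i, j) \<in> J" for i j
    using assms[OF that] by (intro closed_UN ballI closed_Collect_eq continuous_intros)
  ultimately show ?thesis
    by (auto intro!: closed_INT)
qed

definition entry_box :: "('n::finite \<times> 'n) set \<Rightarrow> ('n \<Rightarrow> 'n \<Rightarrow> int set) \<Rightarrow> 'n mat set" where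
  "entry_box J B = {X. \<forall>(i, j)\<in>J. real_of_int (Min (B i j)) \<le> X $ i $ j \<and>
                                   X $ i $ j \<le> real_of_int (Max (B i j))}"

definition entries_on :: "('n::finite \<times> 'n) set \<Rightarrow> 'n mat \<Rightarrow> real^('n \<times> 'n)" where
  "entries_on J X = (\<chi> p. if p \<in> J then X $ fst p $ snd p else 0)"

lemma entries_on_nth: "entries_on J X $ (i, j) = (if (i, j) \<in> J then X $ i $ j else 0)"
  by (simp add: entries_on_def)

lemma linear_entries_on: "linear (entries_on J)"
  by (rule linearI) (simp_all add: entries_on_def vec_eq_iff)

lemma entry_box_eq_vimage:
  fixes J :: "('n::finite \<times> 'n) set"
  shows "entry_box J B = entries_on J -` cbox
     (\<chi> p. if p \<in> J then real_of_int (Min (B (fst p) (snd p))) else 0)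
     (\<chi> p. if p \<in> J then real_of_int (Max (B (fst p) (snd p))) else 0)"
  by (simp add: entry_box_def entries_on_def mem_box_cart set_eq_iff split_paired_All)
     (auto simp: Ball_def)

lemma convex_entry_box: "convex (entry_box J B)"
  unfolding entry_box_eq_vimage by (rule convex_linear_vimage[OF linear_entries_on convex_box(1)])

lemma bounded_entries_on_entry_box: "bounded (entries_on J ` entry_box J B)"
  unfolding entry_box_eq_vimage by (rule bounded_subset[OF bounded_cbox]) blast

lemma integral_entries_subset_entry_box:
  assumes "\<And>i j. (i, j) \<in> J \<Longrightarrow> finite (B i j) \<and> B i j \<noteq> {}"
  shows "{X. \<forall>(i, j)\<in>J. X $ i $ j \<in> real_of_int ` B i j} \<subseteq> entry_box J B"
  using assms by (fastforce simp: entry_box_def)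

lemma bounded_line_imp_direction_zero:
  fixes d :: "'a::real_normed_vector"
  assumes "bounded K" and "\<And>t. x + t *\<^sub>R d \<in> K"
  shows "d = 0"
proof -
  have "bounded (range (\<lambda>t. x + t *\<^sub>R d))"
    using assms by (blast intro: bounded_subset)
  then have "bounded ((\<lambda>y. y - x) ` range (\<lambda>t. x + t *\<^sub>R d))"
    by (rule bounded_translation_minus)
  then have "bounded (span {d})"
    by (simp add: span_singleton image_image)
  then have "span {d} = {0}"
    by (simp add: subspace_bounded_eq_trivial)
  then show ?thesis
    using span_base[of d "{d}"] by simp
qed

lemma bounded_if_injective_on_difference_subspace:
  fixes g :: "'a::euclidean_space \<Rightarrow> 'b::euclidean_space"
  assumes S: "subspace S" and g: "linear g" and inj: "\<And>x. x \<in> S \<Longrightarrow> g x = 0 \<Longrightarrow> x = 0"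
    and bounded_image: "bounded (g ` T)" and diff: "\<And>x. x \<in> T \<Longrightarrow> x - a \<in> S"
  shows "bounded T"
proof -
  have "bounded_linear g"
    using g by (simp add: linear_conv_bounded_linear)
  then obtain e where e: "e > 0" "\<And>x. x \<in> S \<Longrightarrow> e * norm x \<le> norm (g x)"
    using injective_imp_isometric[OF closed_subspace[OF S] S] inj by blast
  obtain M where M: "\<And>x. x \<in> T \<Longrightarrow> norm (g x) \<le> M"
    using bounded_image by (auto simp: bounded_iff)
  have "dist a x \<le> (M + norm (g a)) / e" if "x \<in> T" for x
  proof -
    have "e * dist a x = e * norm (x - a)"
      by (simp add: dist_norm norm_minus_commute)
    also have "\<dots> \<le> norm (g x - g a)"
      using e(2)[OF diff[OF that]] by (simp add: linear_diff[OF g])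
    also have "\<dots> \<le> M + norm (g a)"
      using M[OF that] norm_triangle_ineq4[of "g x" "g a"] by linarith
    finally show ?thesis
      using e(1) by (simp add: field_simps)
  qed
  then show ?thesis
    unfolding bounded_def by blast
qed

lemma bounded_symm_box_relaxation:
  assumes bounded_P: "bounded (P_set A2 b2 J B)" and X0: "X0 \<in> P_set A2 b2 J B"
  shows "bounded {X. symm X \<and> lin_sat A2 b2 X \<and> X \<in> entry_box J B}"
proof (rule bounded_if_injective_on_difference_subspace
    [OF subspace_symm_lin_sat_0 linear_entries_on, where a = X0])
  fix D assume D: "D \<in> {D. symm D \<and> lin_sat A2 (\<lambda>_. 0) D}" and "entries_on J D = 0"
  then have "D $ i $ j = 0" if "(i, j) \<in> J" for i j
    using that entries_on_nth[of J D i j] by simp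
  then have "X0 + t *\<^sub>R D \<in> P_set A2 b2 J B" for t
    using X0 D by (auto simp: P_set_def symm_iff lin_sat_add_line)
  then show "D = 0"
    by (rule bounded_line_imp_direction_zero[OF bounded_P])
next
  show "bounded (entries_on J ` {X. symm X \<and> lin_sat A2 b2 X \<and> X \<in> entry_box J B})"
    by (rule bounded_subset[OF bounded_entries_on_entry_box]) blast
next
  fix X assume "X \<in> {X. symm X \<and> lin_sat A2 b2 X \<and> X \<in> entry_box J B}"
  then show "X - X0 \<in> {D. symm D \<and> lin_sat A2 (\<lambda>_. 0) D}"
    using X0 by (auto simp: P_set_def symm_iff lin_sat_diff)
qed

lemma closed_P_set:
  assumes "\<And>i j. (i, j) \<in> J \<Longrightarrow> finite (B i j)"
  shows "closed (P_set A2 b2 J B)"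
proof -
  have "P_set A2 b2 J B = {X. symm X} \<inter> {X. lin_sat A2 b2 X}
      \<inter> {X. \<forall>(i, j)\<in>J. X $ i $ j \<in> real_of_int ` B i j}"
    by (auto simp: P_set_def)
  then show ?thesis
    by (simp add: closed_Int closed_symm closed_lin_sat closed_integral_entries assms)
qed

lemma F_MISDP_eq: "F_MISDP A1 b1 A2 b2 J B = {X. lin_sat A1 b1 X \<and> psd X} \<inter> P_set A2 b2 J B"
  by (auto simp: F_MISDP_def P_set_def psd_def)

lemma F_LD_eq: "F_LD A1 b1 A2 b2 J B = {X. lin_sat A1 b1 X \<and> psd X} \<inter> convex hull P_set A2 b2 J B"
  by (auto simp: F_LD_def)

lemma F_SDP_eq:
  "F_SDP A1 b1 A2 b2 J B = {X. lin_sat A1 b1 X \<and> psd X} \<inter> {X. lin_sat A2 b2 X \<and> X \<in> entry_box J B}"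
  unfolding F_SDP_def entry_box_def by blast

lemma F_MISDP_subset_F_LD: "F_MISDP A1 b1 A2 b2 J B \<subseteq> F_LD A1 b1 A2 b2 J B"
  unfolding F_MISDP_eq F_LD_eq by (intro Int_mono order_refl hull_subset)

lemma F_LD_subset_F_SDP:
  assumes "\<And>i j. (i, j) \<in> J \<Longrightarrow> finite (B i j) \<and> B i j \<noteq> {}"
  shows "F_LD A1 b1 A2 b2 J B \<subseteq> F_SDP A1 b1 A2 b2 J B"
proof -
  have "{X. \<forall>(i, j)\<in>J. X $ i $ j \<in> real_of_int ` B i j} \<subseteq> entry_box J B"
    by (rule integral_entries_subset_entry_box) (rule assms)
  then have "P_set A2 b2 J B \<subseteq> {X. lin_sat A2 b2 X \<and> X \<in> entry_box J B}"
    unfolding P_set_def by blast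
  moreover have "convex {X. lin_sat A2 b2 X \<and> X \<in> entry_box J B}"
    using convex_Int[OF convex_lin_sat convex_entry_box] by (simp add: Collect_conj_eq)
  ultimately have "convex hull P_set A2 b2 J B \<subseteq> {X. lin_sat A2 b2 X \<and> X \<in> entry_box J B}"
    by (rule hull_minimal)
  then show ?thesis
    unfolding F_LD_eq F_SDP_eq by blast
qed

lemma closed_lin_sat_psd: "closed {X. lin_sat A b X \<and> psd X}"
  using closed_Int[OF closed_lin_sat closed_psd] by (simp add: Collect_conj_eq)

lemma compact_F_LD:
  assumes "\<And>i j. (i, j) \<in> J \<Longrightarrow> finite (B i j)" and "bounded (P_set A2 b2 J B)"
  shows "compact (F_LD A1 b1 A2 b2 J B)"
proof -
  have "compact (P_set A2 b2 J B)"
    using assms closed_P_set[OF assms(1)] by (simp add: compact_eq_bounded_closed)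
  then have "compact (convex hull P_set A2 b2 J B)"
    by (rule compact_convex_hull)
  then show ?thesis
    unfolding F_LD_eq by (rule closed_Int_compact[OF closed_lin_sat_psd])
qed

lemma compact_F_MISDP:
  assumes "\<And>i j. (i, j) \<in> J \<Longrightarrow> finite (B i j)" and "bounded (F_MISDP A1 b1 A2 b2 J B)"
  shows "compact (F_MISDP A1 b1 A2 b2 J B)"
  using assms(2) closed_Int[OF closed_lin_sat_psd closed_P_set[OF assms(1)]]
  by (simp add: compact_eq_bounded_closed F_MISDP_eq)

lemma bounded_F_SDP:
  assumes "bounded (P_set A2 b2 J B)" and "P_set A2 b2 J B \<noteq> {}"
  shows "bounded (F_SDP A1 b1 A2 b2 J B)"
proof -
  obtain X0 where "X0 \<in> P_set A2 b2 J B"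
    using assms(2) by blast
  then show ?thesis
    by (rule bounded_subset[OF bounded_symm_box_relaxation[OF assms(1)]])
       (auto simp: F_SDP_eq psd_def)
qed

lemma optval_eq_minimum:
  "X \<in> F \<Longrightarrow> (\<And>Y. Y \<in> F \<Longrightarrow> frob C X \<le> frob C Y) \<Longrightarrow> optval C F = frob C X"
  unfolding optval_def by (rule cInf_eq_minimum) auto

lemma optval_le:
  assumes "bounded F" and "Y \<in> F"
  shows "optval C F \<le> frob C Y"
proof -
  have "bounded (frob C ` F)"
    using assms(1) bounded_linear_frob by (rule bounded_linear_image)
  then show ?thesis
    unfolding optval_def using assms(2) by (intro cINF_lower bounded_imp_bdd_below)
qed

lemma optval_eq_iff_optset_minimizes:
  assumes "S \<subseteq> T" and "compact S" and "S \<noteq> {}" and "bounded T"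
  shows "optval C T = optval C S \<longleftrightarrow> (\<forall>X\<in>optset C S. \<forall>Y\<in>T. frob C X \<le> frob C Y)"
proof
  assume equal: "optval C T = optval C S"
  show "\<forall>X\<in>optset C S. \<forall>Y\<in>T. frob C X \<le> frob C Y"
  proof (intro ballI)
    fix X Y assume "X \<in> optset C S" and "Y \<in> T"
    then have "frob C X = optval C T"
      using equal by (simp add: optset_def)
    also have "\<dots> \<le> frob C Y"
      using optval_le[OF assms(4) \<open>Y \<in> T\<close>] .
    finally show "frob C X \<le> frob C Y" .
  qed
next
  assume minimizes: "\<forall>X\<in>optset C S. \<forall>Y\<in>T. frob C X \<le> frob C Y"
  obtain X where X: "X \<in> S" "\<And>Y. Y \<in> S \<Longrightarrow> frob C X \<le> frob C Y"
    using continuous_attains_inf[OF assms(2,3) linear_continuous_on[OF bounded_linear_frob]] by blast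
  then have "optval C S = frob C X"
    by (rule optval_eq_minimum)
  with X have "X \<in> optset C S"
    by (simp add: optset_def)
  with minimizes X(1) assms(1) have "optval C T = frob C X"
    by (intro optval_eq_minimum) auto
  with \<open>optval C S = frob C X\<close> show "optval C T = optval C S"
    by simp
qed

lemma uminus_in_normal_cone_iff:
  "symm C \<Longrightarrow> - C \<in> normal_cone K X \<longleftrightarrow> (\<forall>Y\<in>K. frob C X \<le> frob C Y)"
  by (auto simp: normal_cone_def frob_uminus_left symm_iff)

theorem theorem2:
  fixes C :: "real^'n::finite^'n"
    and A1 :: "'k::finite \<Rightarrow> real^'n^'n" and b1 :: "'k \<Rightarrow> real"
    and A2 :: "'l::finite \<Rightarrow> real^'n^'n" and b2 :: "'l \<Rightarrow> real"
    and J :: "('n \<times> 'n) set" and B :: "'n \<Rightarrow> 'n \<Rightarrow> int set"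
  assumes "symm C"
    and "\<And>i. symm (A1 i)" and "\<And>i. symm (A2 i)"
    and "\<And>i j. (i, j) \<in> J \<Longrightarrow> finite (B i j) \<and> B i j \<noteq> {}"
    and "bounded (P_set A2 b2 J B)"
    and "F_MISDP A1 b1 A2 b2 J B \<noteq> {}"
    and "bounded (F_MISDP A1 b1 A2 b2 J B)"
  shows "(optval C (F_LD A1 b1 A2 b2 J B) = optval C (F_MISDP A1 b1 A2 b2 J B)
            \<longleftrightarrow> (\<forall>X\<in>optset C (F_MISDP A1 b1 A2 b2 J B).
                   - C \<in> normal_cone (F_LD A1 b1 A2 b2 J B) X))
       \<and> (optval C (F_SDP A1 b1 A2 b2 J B) = optval C (F_LD A1 b1 A2 b2 J B)
            \<longleftrightarrow> (\<forall>X\<in>optset C (F_LD A1 b1 A2 b2 J B).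
                   - C \<in> normal_cone (F_SDP A1 b1 A2 b2 J B) X))"
proof -
  note finite_B = assms(4)[THEN conjunct1]
  note compact_F_LD = compact_F_LD[OF finite_B assms(5)]
  have "P_set A2 b2 J B \<noteq> {}"
    using assms(6) by (auto simp: F_MISDP_eq)
  then have "bounded (F_SDP A1 b1 A2 b2 J B)"
    by (rule bounded_F_SDP[OF assms(5)])
  then show ?thesis
    unfolding uminus_in_normal_cone_iff[OF assms(1)]
    using optval_eq_iff_optset_minimizes[OF F_MISDP_subset_F_LD
        compact_F_MISDP[OF finite_B assms(7)] assms(6) compact_imp_bounded[OF compact_F_LD]]
      optval_eq_iff_optset_minimizes[OF F_LD_subset_F_SDP[OF assms(4)] compact_F_LD]
      assms(6) F_MISDP_subset_F_LD
    by blast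
qed

end
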